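(* Let $f\in L^1(I)$, $(\varepsilon_n)$ positive with $\varepsilon_n\to0$, $N_n\ge2$ integers, $\mathbf q^n\in\mathbb R^{N_n-1}$ $\varepsilon_n$-feasible, and assume $\chi(\mathbf q^n,\varepsilon_n)\to\rho$ weakly-$\star$ in $L^\infty(I)$. Let $F^n=2\varepsilon_n\sum_{i=1}^{N_n-1}f_i^{n}\,\delta_{q^n_i}$ with $f_i^n=\frac1{2\varepsilon_n}\int_{q^n_i-\varepsilon_n}^{q^n_i+\varepsilon_n}f$. Then for every $v\in H^1_0(I)$, $\langle F^n,v\rangle=\sum_{i=1}^{N_n-1}2\varepsilon_n f_i^n v(q_i^n)\to\int_I\rho f v\,dx$; i.e. $F^n\to\rho f$ weakly-$\star$ in $H^{-1}(I)$.
   Context: $I=(0,1)$. For $\mathbf q=(q_1,\dots,q_{N-1})$ set $q_0=0$, $q_N=1$, $d_i=q_i-q_{i-1}-2\varepsilon$; $\mathbf q$ is $\varepsilon$-feasible if $d_i\ge0$ for $i=1,\dots,N$. $\chi(\mathbf q,\varepsilon)=\sum_{i=1}^{N-1}\mathbf 1_{(q_i-\varepsilon,q_i+\varepsilon)}+\mathbf 1_{(0,\varepsilon)}+\mathbf 1_{(1-\varepsilon,1)}$. $\delta_x$ is the Dirac mass at $x$. *)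

theory Defs
  imports "HOL-Analysis.Analysis"
begin

abbreviation I01 :: "real set" where "I01 \<equiv> {0<..<1}"

definition qext :: "(nat \<Rightarrow> real) \<Rightarrow> nat \<Rightarrow> nat \<Rightarrow> real" where
  "qext q N i = (if i = 0 then 0 else if i = N then 1 else q i)"

definition feasible :: "(nat \<Rightarrow> real) \<Rightarrow> nat \<Rightarrow> real \<Rightarrow> bool" where
  "feasible q N \<epsilon> \<longleftrightarrow> (\<forall>i\<in>{1..N}. qext q N i - qext q N (i - 1) - 2 * \<epsilon> \<ge> 0)"

definition chi :: "(nat \<Rightarrow> real) \<Rightarrow> nat \<Rightarrow> real \<Rightarrow> real \<Rightarrow> real" where
  "chi q N \<epsilon> x = (\<Sum>i=1..N-1. indicator {q i - \<epsilon><..<q i + \<epsilon>} x)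
      + indicator {0<..<\<epsilon>} x + indicator {1 - \<epsilon><..<1} x"

definition Linf_I :: "(real \<Rightarrow> real) \<Rightarrow> bool" where
  "Linf_I \<rho> \<longleftrightarrow> (\<lambda>x. indicator I01 x * \<rho> x) \<in> borel_measurable lborel
     \<and> (\<exists>C. AE x in lborel. x \<in> I01 \<longrightarrow> \<bar>\<rho> x\<bar> \<le> C)"

text \<open>Weak-star convergence in L^infinity(I) = dual of L^1(I).\<close>
definition weak_star_Linf :: "(nat \<Rightarrow> real \<Rightarrow> real) \<Rightarrow> (real \<Rightarrow> real) \<Rightarrow> bool" where
  "weak_star_Linf u \<rho> \<longleftrightarrow> (\<forall>g. set_integrable lborel I01 g \<longrightarrow>
      (\<lambda>n. LINT x:I01|lborel. u n x * g x) \<longlonglongrightarrow> (LINT x:I01|lborel. \<rho> x * g x))"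

text \<open>H^1_0(I), via the (continuous) representative: v is the primitive of an
  L^2(I) function vanishing at both endpoints.\<close>
definition H10 :: "(real \<Rightarrow> real) \<Rightarrow> bool" where
  "H10 v \<longleftrightarrow> (\<exists>g. (\<lambda>x. indicator I01 x * g x) \<in> borel_measurable lborel
      \<and> set_integrable lborel I01 (\<lambda>x. (g x)\<^sup>2)
      \<and> (\<forall>x\<in>{0..1}. v x = (LINT t:{0..x}|lborel. g t))
      \<and> v 1 = 0)"

end

theory Submission
  imports Defs
begin

text \<open>
  Write \<open>J\<^sub>i = (q\<^sub>i - \<epsilon>, q\<^sub>i + \<epsilon>)\<close>. Feasibility puts every \<open>J\<^sub>i\<close> inside \<open>I\<close>, so
  \<open>\<langle>F\<^sup>n, v\<rangle> = \<integral>\<^sub>I w\<^sub>n f\<close> where \<open>w\<^sub>n\<close> equals \<open>v(q\<^sub>i)\<close> on each \<open>J\<^sub>i\<close>. Pointwise,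
  \<open>w\<^sub>n\<close> differs from \<open>\<chi>\<^sub>n v\<close> by at most \<open>\<omega>(\<epsilon>\<^sub>n) \<chi>\<^sub>n\<close>, where \<open>\<omega>\<close> is the modulus of
  continuity of \<open>v\<close>; on the two boundary layers this uses \<open>v(0) = v(1) = 0\<close>.
  Hence \<open>|\<langle>F\<^sup>n, v\<rangle> - \<integral>\<^sub>I \<chi>\<^sub>n f v| \<le> \<omega>(\<epsilon>\<^sub>n) \<integral>\<^sub>I \<chi>\<^sub>n |f|\<close>, and the last integral
  stays bounded because it converges. Finally \<open>\<integral>\<^sub>I \<chi>\<^sub>n f v \<rightarrow> \<integral>\<^sub>I \<rho> f v\<close> by weak-star
  convergence, since \<open>f v \<in> L\<^sup>1(I)\<close>.
\<close>

lemma feasible_qext_ge: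
  assumes "feasible q N \<epsilon>" "i \<le> N"
  shows "2 * \<epsilon> * i \<le> qext q N i"
  using assms(2)
proof (induction i)
  case 0
  then show ?case by (simp add: qext_def)
next
  case (Suc i)
  then have "qext q N (Suc i) - qext q N i - 2 * \<epsilon> \<ge> 0"
    using assms(1) unfolding feasible_def by force
  then show ?case using Suc by (simp add: algebra_simps)
qed

lemma feasible_qext_le:
  assumes "feasible q N \<epsilon>" "k \<le> N"
  shows "qext q N (N - k) \<le> 1 - 2 * \<epsilon> * k"
  using assms(2)
proof (induction k)
  case 0
  then show ?case by (simp add: qext_def)
next
  case (Suc k)
  then have "N - k \<in> {1..N}" and "N - k - 1 = N - Suc k"
    by auto
  then have "qext q N (N - k) - qext q N (N - Suc k) - 2 * \<epsilon> \<ge> 0"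
    using assms(1) unfolding feasible_def by metis
  then show ?case using Suc by (simp add: algebra_simps)
qed

lemma feasible_bounds:
  assumes "feasible q N \<epsilon>" "\<epsilon> \<ge> 0" "i \<in> {1..N - 1}"
  shows "2 * \<epsilon> \<le> q i" "q i \<le> 1 - 2 * \<epsilon>"
proof -
  have qi: "qext q N i = q i" and i: "1 \<le> i" "i < N"
    using assms(3) by (auto simp: qext_def)
  have "2 * \<epsilon> * 1 \<le> 2 * \<epsilon> * i" "2 * \<epsilon> * 1 \<le> 2 * \<epsilon> * (N - i)"
    using assms(2) i by (intro mult_left_mono; simp)+
  then show "2 * \<epsilon> \<le> q i" "q i \<le> 1 - 2 * \<epsilon>"
    using feasible_qext_ge[OF assms(1), of i] feasible_qext_le[OF assms(1), of "N - i"] qi i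
    by (simp_all add: Suc_leI)
qed

lemma set_integrable_bounded_mult:
  fixes f h :: "'a \<Rightarrow> real"
  assumes "set_integrable M A f" "set_borel_measurable M A h" "\<And>x. x \<in> A \<Longrightarrow> \<bar>h x\<bar> \<le> C"
  shows "set_integrable M A (\<lambda>x. h x * f x)"
proof (rule set_integrable_bound)
  show "set_integrable M A (\<lambda>x. C * f x)"
    using assms(1) by simp
  have "(\<lambda>x. indicator A x * (h x * f x)) = (\<lambda>x. (indicator A x * h x) * (indicator A x * f x))"
    by (auto simp: fun_eq_iff indicator_def)
  then show "set_borel_measurable M A (\<lambda>x. h x * f x)"
    using assms(1,2) unfolding set_borel_measurable_def set_integrable_def
    by (simp add: borel_measurable_integrable)
  show "AE x in M. x \<in> A \<longrightarrow> norm (h x * f x) \<le> norm (C * f x)"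
  proof (intro AE_I2 impI)
    fix x assume "x \<in> A"
    then have "\<bar>h x\<bar> * \<bar>f x\<bar> \<le> \<bar>C\<bar> * \<bar>f x\<bar>"
      using assms(3) by (intro mult_right_mono) force+
    then show "norm (h x * f x) \<le> norm (C * f x)"
      by (simp add: abs_mult)
  qed
qed

lemma H10_continuous_vanishing:
  assumes "H10 v"
  shows "continuous_on {0..1} v" "v 0 = 0" "v 1 = 0"
proof -
  obtain g where g_meas: "(\<lambda>x. indicator I01 x * g x) \<in> borel_measurable lborel"
    and g_L2: "set_integrable lborel I01 (\<lambda>x. (g x)\<^sup>2)"
    and v_eq: "\<forall>x\<in>{0..1}. v x = (LINT t:{0..x}|lborel. g t)" and v1: "v 1 = 0"
    using assms unfolding H10_def by blast
  show "v 1 = 0"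
    by (fact v1)
  have dominant: "set_integrable lborel I01 (\<lambda>x. 1 + (g x)\<^sup>2)"
    using g_L2 unfolding set_integrable_def
    by (simp add: distrib_left integrable_indicator)
  have abs_le: "\<bar>y\<bar> \<le> 1 + y\<^sup>2" for y :: real
  proof -
    have "0 \<le> (\<bar>y\<bar> - 1)\<^sup>2"
      by simp
    then show ?thesis
      unfolding power2_diff by simp
  qed
  have "set_integrable lborel I01 g"
  proof (rule set_integrable_bound[OF dominant])
    show "set_borel_measurable lborel I01 g"
      using g_meas by (simp add: set_borel_measurable_def)
    show "AE x in lborel. x \<in> I01 \<longrightarrow> norm (g x) \<le> norm (1 + (g x)\<^sup>2)"
      using abs_le by simp
  qed
  then have g_L1: "set_integrable lborel {0..1} g"
    by (subst set_integrable_discrete_difference[where X="{0, 1}"]) auto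
  have v_integral: "v x = integral {0..x} g" if "x \<in> {0..1}" for x
  proof -
    have "set_integrable lborel {0..x} g"
      using that by (intro set_integrable_subset[OF g_L1]) auto
    then show ?thesis
      using v_eq that by (simp add: set_borel_integral_eq_integral(2))
  qed
  show "continuous_on {0..1} v"
    using indefinite_integral_continuous_1[OF set_borel_integral_eq_integral(1)[OF g_L1]]
    by (rule continuous_on_eq) (simp add: v_integral)
  show "v 0 = 0"
    by (simp add: v_integral)
qed

definition window_sample :: "(nat \<Rightarrow> real) \<Rightarrow> nat \<Rightarrow> real \<Rightarrow> (real \<Rightarrow> real) \<Rightarrow> real \<Rightarrow> real" where
  "window_sample q N \<epsilon> v x = (\<Sum>i=1..N-1. indicator {q i - \<epsilon><..<q i + \<epsilon>} x * v (q i))"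

lemma borel_measurable_chi [measurable]: "chi q N \<epsilon> \<in> borel_measurable borel"
  unfolding chi_def by measurable

lemma borel_measurable_window_sample [measurable]:
  "window_sample q N \<epsilon> v \<in> borel_measurable borel"
  unfolding window_sample_def by measurable

lemma chi_nonneg: "0 \<le> chi q N \<epsilon> x"
  unfolding chi_def by (intro add_nonneg_nonneg sum_nonneg) auto

lemma chi_le: "chi q N \<epsilon> x \<le> real N + 2"
proof -
  have "(\<Sum>i=1..N-1. indicator {q i - \<epsilon><..<q i + \<epsilon>} x) \<le> (\<Sum>i=1..N-1. 1 :: real)"
    by (intro sum_mono) (auto simp: indicator_def)
  then show ?thesis
    unfolding chi_def by (auto simp: indicator_def)
qed

lemma abs_window_sample_le: "\<bar>window_sample q N \<epsilon> v x\<bar> \<le> (\<Sum>i=1..N-1. \<bar>v (q i)\<bar>)"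
  unfolding window_sample_def
  by (rule order_trans[OF sum_abs sum_mono]) (auto simp: indicator_def)

lemma window_sums_eq_integral:
  assumes feas: "feasible q N \<epsilon>" and "\<epsilon> > 0" and f: "set_integrable lborel I01 f"
  shows "(\<Sum>i=1..N-1. 2 * \<epsilon> * ((1 / (2 * \<epsilon>)) * (LINT x:{q i - \<epsilon>..q i + \<epsilon>}|lborel. f x)) * v (q i))
    = (LINT x:I01|lborel. window_sample q N \<epsilon> v x * f x)"
proof -
  let ?J = "\<lambda>i. {q i - \<epsilon><..<q i + \<epsilon>}"
  have window_integrable: "set_integrable lborel I01 (\<lambda>x. indicator (?J i) x * f x)" for i
    by (rule set_integrable_bounded_mult[OF f, where C=1]) (auto simp: set_borel_measurable_def)
  have window_integral: "(LINT x:{q i - \<epsilon>..q i + \<epsilon>}|lborel. f x) = (LINT x:I01|lborel. indicator (?J i) x * f x)"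
    if "i \<in> {1..N-1}" for i
  proof -
    have "?J i \<subseteq> I01"
      using feasible_bounds[OF feas _ that] \<open>\<epsilon> > 0\<close> by auto
    then have "(LINT x:I01|lborel. indicator (?J i) x * f x) = (LINT x:?J i|lborel. f x)"
      unfolding set_lebesgue_integral_def by (intro Bochner_Integration.integral_cong) (auto simp: indicator_def)
    also have "\<dots> = (LINT x:{q i - \<epsilon>..q i + \<epsilon>}|lborel. f x)"
      by (rule set_integral_discrete_difference[where X="{q i - \<epsilon>, q i + \<epsilon>}"]) auto
    finally show ?thesis ..
  qed
  have "(\<Sum>i=1..N-1. 2 * \<epsilon> * ((1 / (2 * \<epsilon>)) * (LINT x:{q i - \<epsilon>..q i + \<epsilon>}|lborel. f x)) * v (q i))
      = (\<Sum>i=1..N-1. (LINT x:I01|lborel. indicator (?J i) x * f x) * v (q i))"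
    using \<open>\<epsilon> > 0\<close> window_integral by (intro sum.cong) auto
  also have "\<dots> = (\<integral>x. (\<Sum>i=1..N-1. indicator I01 x * (indicator (?J i) x * f x) * v (q i)) \<partial>lborel)"
    using window_integrable unfolding set_lebesgue_integral_def set_integrable_def
    by (simp add: Bochner_Integration.integral_sum)
  also have "\<dots> = (LINT x:I01|lborel. window_sample q N \<epsilon> v x * f x)"
    unfolding set_lebesgue_integral_def window_sample_def
    by (simp only: real_scaleR_def sum_distrib_left sum_distrib_right mult_ac)
  finally show ?thesis .
qed

lemma window_sample_error:
  assumes q: "\<And>i. i \<in> {1..N-1} \<Longrightarrow> q i \<in> {0..1}" and x: "x \<in> {0..1}"
    and "\<epsilon> \<le> \<delta>" and "v 0 = 0" "v 1 = 0"
    and modulus: "\<And>x y. x \<in> {0..1} \<Longrightarrow> y \<in> {0..1} \<Longrightarrow> \<bar>x - y\<bar> < \<delta> \<Longrightarrow> \<bar>v x - v y\<bar> \<le> \<eta>"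
  shows "\<bar>window_sample q N \<epsilon> v x - chi q N \<epsilon> x * v x\<bar> \<le> \<eta> * chi q N \<epsilon> x"
proof -
  have local_error: "\<bar>indicator A x * (v a - v x)\<bar> \<le> \<eta> * indicator A x"
    if "a \<in> {0..1}" "A \<subseteq> {a - \<epsilon><..<a + \<epsilon>}" for a A
  proof (cases "x \<in> A")
    case True
    with that(2) have "\<bar>a - x\<bar> < \<delta>"
      using \<open>\<epsilon> \<le> \<delta>\<close> by (auto simp: abs_less_iff)
    then have "\<bar>v a - v x\<bar> \<le> \<eta>"
      using that(1) x by (intro modulus)
    then show ?thesis
      using True by simp
  qed simp
  let ?J = "\<lambda>i. {q i - \<epsilon><..<q i + \<epsilon>}" and ?L = "{0<..<\<epsilon>}" and ?R = "{1 - \<epsilon><..<1}"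
  have "window_sample q N \<epsilon> v x - chi q N \<epsilon> x * v x
      = (\<Sum>i=1..N-1. indicator (?J i) x * (v (q i) - v x))
        + indicator ?L x * (v 0 - v x) + indicator ?R x * (v 1 - v x)"
    unfolding window_sample_def chi_def right_diff_distrib sum_subtractf distrib_right sum_distrib_right
      \<open>v 0 = 0\<close> \<open>v 1 = 0\<close> mult_zero_right
    by linarith
  also have "\<bar>\<dots>\<bar> \<le> (\<Sum>i=1..N-1. \<bar>indicator (?J i) x * (v (q i) - v x)\<bar>)
      + \<bar>indicator ?L x * (v 0 - v x)\<bar> + \<bar>indicator ?R x * (v 1 - v x)\<bar>"
    by (intro order_trans[OF abs_triangle_ineq] add_mono sum_abs) simp_all
  also have "\<dots> \<le> (\<Sum>i=1..N-1. \<eta> * indicator (?J i) x) + \<eta> * indicator ?L x + \<eta> * indicator ?R x"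
    using q by (intro add_mono sum_mono local_error) auto
  also have "\<dots> = \<eta> * chi q N \<epsilon> x"
    unfolding chi_def distrib_left sum_distrib_left ..
  finally show ?thesis .
qed

lemma set_integrable_mult_continuous:
  fixes f v :: "real \<Rightarrow> real"
  assumes f: "set_integrable lborel A f" and "A \<in> sets borel" "A \<subseteq> S" "compact S"
    and "continuous_on S v"
  shows "set_integrable lborel A (\<lambda>x. f x * v x)"
proof -
  obtain B where B: "\<And>x. x \<in> S \<Longrightarrow> \<bar>v x\<bar> \<le> B"
    using compact_imp_bounded[OF compact_continuous_image[OF \<open>continuous_on S v\<close> \<open>compact S\<close>]]
    unfolding bounded_real by (meson imageI)
  have "set_borel_measurable borel A v"
    using continuous_on_subset[OF \<open>continuous_on S v\<close> \<open>A \<subseteq> S\<close>]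
    by (rule set_measurable_continuous_on[OF \<open>A \<in> sets borel\<close>])
  then have "set_borel_measurable lborel A v"
    by (simp add: set_borel_measurable_def)
  then have "set_integrable lborel A (\<lambda>x. v x * f x)"
    using B \<open>A \<subseteq> S\<close> by (intro set_integrable_bounded_mult[OF f]) auto
  then show ?thesis
    by (simp add: mult.commute)
qed

lemma window_integral_error:
  assumes feas: "feasible q N \<epsilon>" and "\<epsilon> > 0"
    and f: "set_integrable lborel I01 f" and fv: "set_integrable lborel I01 (\<lambda>x. f x * v x)"
    and "\<epsilon> \<le> \<delta>" and "v 0 = 0" "v 1 = 0"
    and modulus: "\<And>x y. x \<in> {0..1} \<Longrightarrow> y \<in> {0..1} \<Longrightarrow> \<bar>x - y\<bar> < \<delta> \<Longrightarrow> \<bar>v x - v y\<bar> \<le> \<eta>"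
  shows "\<bar>(LINT x:I01|lborel. window_sample q N \<epsilon> v x * f x) - (LINT x:I01|lborel. chi q N \<epsilon> x * (f x * v x))\<bar>
    \<le> \<eta> * (LINT x:I01|lborel. chi q N \<epsilon> x * \<bar>f x\<bar>)"
proof -
  let ?w = "window_sample q N \<epsilon> v" and ?\<chi> = "chi q N \<epsilon>"
  have chi_bound: "\<bar>?\<chi> x\<bar> \<le> real N + 2" for x
    using chi_nonneg chi_le by (simp add: abs_of_nonneg)
  have w_integrable: "set_integrable lborel I01 (\<lambda>x. ?w x * f x)"
    by (rule set_integrable_bounded_mult[OF f _ abs_window_sample_le])
      (simp add: set_borel_measurable_def)
  have chi_integrable: "set_integrable lborel I01 (\<lambda>x. ?\<chi> x * g x)"
    if "set_integrable lborel I01 g" for g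
    by (rule set_integrable_bounded_mult[OF that _ chi_bound]) (simp add: set_borel_measurable_def)
  have q_unit: "q i \<in> {0..1}" if "i \<in> {1..N-1}" for i
    using feasible_bounds[OF feas _ that] \<open>\<epsilon> > 0\<close> by auto
  have pointwise: "\<bar>?w x * f x - ?\<chi> x * (f x * v x)\<bar> \<le> \<eta> * (?\<chi> x * \<bar>f x\<bar>)" if "x \<in> I01" for x
  proof -
    have "\<bar>?w x - ?\<chi> x * v x\<bar> \<le> \<eta> * ?\<chi> x"
      using that by (intro window_sample_error[OF q_unit _ \<open>\<epsilon> \<le> \<delta>\<close> \<open>v 0 = 0\<close> \<open>v 1 = 0\<close> modulus]) auto
    then have "\<bar>f x\<bar> * \<bar>?w x - ?\<chi> x * v x\<bar> \<le> \<bar>f x\<bar> * (\<eta> * ?\<chi> x)"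
      by (rule mult_left_mono) simp
    moreover have "?w x * f x - ?\<chi> x * (f x * v x) = f x * (?w x - ?\<chi> x * v x)"
      by (simp add: algebra_simps)
    ultimately show ?thesis
      by (simp only: abs_mult mult_ac)
  qed
  have "\<bar>(LINT x:I01|lborel. ?w x * f x) - (LINT x:I01|lborel. ?\<chi> x * (f x * v x))\<bar>
      = \<bar>LINT x:I01|lborel. ?w x * f x - ?\<chi> x * (f x * v x)\<bar>"
    using w_integrable chi_integrable[OF fv] by simp
  also have "\<dots> \<le> (LINT x:I01|lborel. \<bar>?w x * f x - ?\<chi> x * (f x * v x)\<bar>)"
    using set_integral_norm_bound[OF set_integral_diff(1)[OF w_integrable chi_integrable[OF fv]]] by simp
  also have "\<dots> \<le> (LINT x:I01|lborel. \<eta> * (?\<chi> x * \<bar>f x\<bar>))"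
  proof (rule set_integral_mono[OF _ _ pointwise])
    show "set_integrable lborel I01 (\<lambda>x. \<bar>?w x * f x - ?\<chi> x * (f x * v x)\<bar>)"
      using w_integrable chi_integrable[OF fv] by (intro set_integrable_abs set_integral_diff(1))
    show "set_integrable lborel I01 (\<lambda>x. \<eta> * (?\<chi> x * \<bar>f x\<bar>))"
      using chi_integrable[OF set_integrable_abs[OF f]] by (rule set_integrable_mult_right)
  qed
  finally show ?thesis
    by simp
qed

lemma window_sums_tendsto:
  fixes f \<rho> v :: "real \<Rightarrow> real" and \<epsilon> :: "nat \<Rightarrow> real"
  assumes f: "set_integrable lborel I01 f"
    and eps_pos: "\<And>n. \<epsilon> n > 0" and eps_lim: "\<epsilon> \<longlonglongrightarrow> 0"
    and feas: "\<And>n. feasible (q n) (N n) (\<epsilon> n)"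
    and conv: "weak_star_Linf (\<lambda>n. chi (q n) (N n) (\<epsilon> n)) \<rho>"
    and v: "continuous_on {0..1} v" "v 0 = 0" "v 1 = 0"
  shows "(\<lambda>n. \<Sum>i=1..N n - 1. 2 * \<epsilon> n *
        ((1 / (2 * \<epsilon> n)) * (LINT x:{q n i - \<epsilon> n..q n i + \<epsilon> n}|lborel. f x)) * v (q n i))
    \<longlonglongrightarrow> (LINT x:I01|lborel. \<rho> x * f x * v x)"
proof -
  let ?\<chi> = "\<lambda>n. chi (q n) (N n) (\<epsilon> n)"
  define S where "S n = (LINT x:I01|lborel. window_sample (q n) (N n) (\<epsilon> n) v x * f x)" for n
  define B where "B n = (LINT x:I01|lborel. ?\<chi> n x * (f x * v x))" for n
  define C where "C n = (LINT x:I01|lborel. ?\<chi> n x * \<bar>f x\<bar>)" for n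
  have fv: "set_integrable lborel I01 (\<lambda>x. f x * v x)"
    using v(1) by (intro set_integrable_mult_continuous[OF f]) auto
  have B_lim: "B \<longlonglongrightarrow> (LINT x:I01|lborel. \<rho> x * (f x * v x))"
    using conv fv unfolding weak_star_Linf_def B_def by blast
  have "C \<longlonglongrightarrow> (LINT x:I01|lborel. \<rho> x * \<bar>f x\<bar>)"
    using conv set_integrable_abs[OF f] unfolding weak_star_Linf_def C_def by blast
  then obtain M where "M > 0" and M: "\<And>n. \<bar>C n\<bar> \<le> M"
    using convergent_imp_Bseq[OF convergentI] BseqE by (metis real_norm_def)
  have "(\<lambda>n. S n - B n) \<longlonglongrightarrow> 0"
  proof (rule tendsto_iff[THEN iffD2], intro allI impI)
    fix r :: real assume "r > 0"
    define \<eta> where "\<eta> = r / (2 * M)"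
    have "\<eta> > 0"
      using \<open>r > 0\<close> \<open>M > 0\<close> by (simp add: \<eta>_def)
    then obtain \<delta> where "\<delta> > 0"
      and \<delta>: "\<And>x y. x \<in> {0..1} \<Longrightarrow> y \<in> {0..1} \<Longrightarrow> dist x y < \<delta> \<Longrightarrow> dist (v x) (v y) < \<eta>"
      using compact_uniformly_continuous[OF v(1)] unfolding uniformly_continuous_on_def by fastforce
    have modulus: "\<bar>v x - v y\<bar> \<le> \<eta>" if "x \<in> {0..1}" "y \<in> {0..1}" "\<bar>x - y\<bar> < \<delta>" for x y
      using \<delta>[OF that(1,2)] that(3) by (simp add: dist_real_def)
    show "\<forall>\<^sub>F n in sequentially. dist (S n - B n) 0 < r"
      using order_tendstoD(2)[OF eps_lim \<open>\<delta> > 0\<close>]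
    proof eventually_elim
      case (elim n)
      have "\<bar>S n - B n\<bar> \<le> \<eta> * C n"
        unfolding S_def B_def C_def
        using elim by (intro window_integral_error[OF feas eps_pos f fv _ v(2,3) modulus]) auto
      also have "\<dots> \<le> \<eta> * M"
        using M[of n] \<open>\<eta> > 0\<close> by (intro mult_left_mono) auto
      also have "\<dots> < r"
        using \<open>r > 0\<close> \<open>M > 0\<close> by (simp add: \<eta>_def)
      finally show ?case
        by (simp add: dist_real_def)
    qed
  qed
  from tendsto_add[OF this B_lim] have "S \<longlonglongrightarrow> (LINT x:I01|lborel. \<rho> x * (f x * v x))"
    by simp
  moreover have "(\<lambda>n. \<Sum>i=1..N n - 1. 2 * \<epsilon> n *
        ((1 / (2 * \<epsilon> n)) * (LINT x:{q n i - \<epsilon> n..q n i + \<epsilon> n}|lborel. f x)) * v (q n i)) = S"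
    unfolding S_def by (rule ext) (rule window_sums_eq_integral[OF feas eps_pos f])
  ultimately show ?thesis
    by (simp only: mult.assoc)
qed

theorem mainTheorem4:
  fixes f \<rho> :: "real \<Rightarrow> real"
    and \<epsilon> :: "nat \<Rightarrow> real"
    and N :: "nat \<Rightarrow> nat"
    and q :: "nat \<Rightarrow> nat \<Rightarrow> real"
  assumes f_L1: "set_integrable lborel I01 f"
    and eps_pos: "\<And>n. \<epsilon> n > 0"
    and eps_lim: "\<epsilon> \<longlonglongrightarrow> 0"
    and N_ge: "\<And>n. N n \<ge> 2"
    and feas: "\<And>n. feasible (q n) (N n) (\<epsilon> n)"
    and rho_Linf: "Linf_I \<rho>"
    and conv: "weak_star_Linf (\<lambda>n. chi (q n) (N n) (\<epsilon> n)) \<rho>"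
  shows "\<forall>v. H10 v \<longrightarrow>
    (\<lambda>n. \<Sum>i=1..N n - 1. 2 * \<epsilon> n *
        ((1 / (2 * \<epsilon> n)) * (LINT x:{q n i - \<epsilon> n..q n i + \<epsilon> n}|lborel. f x))
        * v (q n i))
    \<longlonglongrightarrow> (LINT x:I01|lborel. \<rho> x * f x * v x)"
  using window_sums_tendsto[OF f_L1 eps_pos eps_lim feas conv] H10_continuous_vanishing
  by blast

end
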